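(* Let $X$ be a real Hilbert space, let $T\colon X\to X$ be nonexpansive, let $v:=P_{\overline{\operatorname{ran}}(\mathrm{Id}-T)}0$ and assume $v\in\operatorname{ran}(\mathrm{Id}-T)$. Let $y_0\in\operatorname{Fix}(v+T)$. Then: (i) $y_0-\mathbb R_+v\subseteq\operatorname{Fix}(v+T)$; (ii) $\operatorname{Fix}(v+T)-\mathbb R_+v=\operatorname{Fix}(v+T)$; (iii) $-\mathbb R_+v\subseteq\operatorname{rec}(\operatorname{Fix}(v+T))$; (iv) for all $n\in\mathbb N$, $T^ny_0=y_0-nv$; (v) $\left]-\infty,1\right]\cdot v+\operatorname{Fix}(T_{-v})\subseteq\operatorname{Fix}(v+T)$; in particular $\operatorname{Fix}(T_{-v})\subseteq\operatorname{Fix}(v+T)$; (vi) for every $x\in X$, the sequence $(T^nx+nv)_{n\in\mathbb N}$ is Fejér monotone with respect to both $\operatorname{Fix}(v+T)$ and $\operatorname{Fix}(T_{-v})$; (vii) if $x_0\in\operatorname{Fix}(T_{-v})$ and $x_n:=T^nx_0$, then $x_n=x_0-nv$ for all $n$ and $(x_n)_{n\in\mathbb N}$ lies in $\operatorname{Fix}(T_{-v})$.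
   Context: $\overline{\operatorname{ran}}(\mathrm{Id}-T)$ is the closure of the range of $\mathrm{Id}-T$; it is convex for nonexpansive $T$, so $v$ is well-defined (the infimal displacement vector, the unique element of minimal norm of that closed convex set). $T_{-v}x:=T(x+v)$ and $(v+T)x:=v+Tx$. $\operatorname{Fix}$ denotes the fixed point set. $\operatorname{rec}C=\{x: x+C\subseteq C\}$ is the recession cone. A sequence $(y_n)$ is Fejér monotone with respect to $C$ if $\|y_{n+1}-c\|\le\|y_n-c\|$ for all $c\in C$ and all $n$. *)

theory Defs
  imports "HOL-Analysis.Analysis"
begin

definition nonexpansive :: "('a::real_normed_vector \<Rightarrow> 'a) \<Rightarrow> bool" where
  "nonexpansive T \<longleftrightarrow> (\<forall>x y. norm (T x - T y) \<le> norm (x - y))"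

text \<open>Metric projection onto a set C (nearest point); same as the library's
  closest_point but without the heine_borel restriction.  For nonempty closed
  convex C in a Hilbert space it is the unique nearest point.\<close>
definition proj :: "'a::real_inner set \<Rightarrow> 'a \<Rightarrow> 'a" where
  "proj C x = (SOME p. p \<in> C \<and> (\<forall>y\<in>C. dist x p \<le> dist x y))"

definition Fix :: "('a \<Rightarrow> 'a) \<Rightarrow> 'a set" where
  "Fix f = {x. f x = x}"

definition rec_cone :: "'a::real_vector set \<Rightarrow> 'a set" where
  "rec_cone C = {x. \<forall>c\<in>C. x + c \<in> C}"

definition fejer_monotone :: "(nat \<Rightarrow> 'a::real_normed_vector) \<Rightarrow> 'a set \<Rightarrow> bool" where
  "fejer_monotone y C \<longleftrightarrow> (\<forall>c\<in>C. \<forall>n. norm (y (Suc n) - c) \<le> norm (y n - c))"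

end

theory Submission
  imports Defs
begin

text \<open>The closure \<open>D\<close> of the range of \<open>Id - T\<close> is convex: for a convex combination \<open>c\<close> of
  displacements, the solutions of \<open>x - T x = c - t x\<close> satisfy \<open>\<parallel>t x\<parallel>\<^sup>2 = O(t)\<close> by monotonicity
  of \<open>Id - T\<close>, so \<open>c\<close> is a limit of displacements. Hence \<open>v\<close> is the unique element of minimal
  norm of \<open>D\<close>. If \<open>y\<close> is a fixed point of \<open>v + T\<close>, then \<open>T y = y - v\<close> and the displacement at
  \<open>T y\<close> has norm at most \<open>\<parallel>v\<parallel>\<close>, so it equals \<open>v\<close>: \<open>Fix (v + T)\<close> is stable under subtracting \<open>v\<close>.
  Being the fixed point set of a nonexpansive map on a Hilbert space it is convex, hence stable
  under subtracting every nonnegative multiple of \<open>v\<close>; all assertions follow from this.\<close>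

lemma mem_closure_if_dist_sq_le:
  fixes c :: "'a::metric_space"
  assumes "\<And>t. 0 < t \<Longrightarrow> t \<le> 1 \<Longrightarrow> \<exists>y\<in>S. (dist y c)\<^sup>2 \<le> t * Q"
  shows "c \<in> closure S"
  unfolding closure_approachable
proof (intro allI impI)
  fix e :: real assume e: "e > 0"
  define t where "t = min 1 (e\<^sup>2 / (\<bar>Q\<bar> + 1))"
  have t: "0 < t" "t \<le> 1" unfolding t_def using e by auto
  then obtain y where y: "y \<in> S" "(dist y c)\<^sup>2 \<le> t * Q" using assms by blast
  have "t * Q \<le> t * \<bar>Q\<bar>" using t by (simp add: mult_left_mono)
  also have "\<dots> \<le> e\<^sup>2 / (\<bar>Q\<bar> + 1) * \<bar>Q\<bar>" by (rule mult_right_mono) (auto simp: t_def)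
  also have "\<dots> < e\<^sup>2" using e by (simp add: field_simps)
  finally have "(dist y c)\<^sup>2 < e\<^sup>2" using y(2) by linarith
  then have "dist y c < e" using e by (simp add: power_less_imp_less_base)
  with y(1) show "\<exists>y\<in>S. dist y c < e" by blast
qed

lemma convex_closure_if_combinations_in_closure:
  fixes S :: "'a::real_normed_vector set"
  assumes "\<And>x y u. x \<in> S \<Longrightarrow> y \<in> S \<Longrightarrow> 0 \<le> u \<Longrightarrow> u \<le> 1 \<Longrightarrow> (1 - u) *\<^sub>R x + u *\<^sub>R y \<in> closure S"
  shows "convex (closure S)"
  unfolding convex_alt
proof (intro ballI allI impI)
  fix x y and u :: real
  assume xy: "x \<in> closure S" "y \<in> closure S" and u: "0 \<le> u \<and> u \<le> 1"
  define f where "f p = (1 - u) *\<^sub>R fst p + u *\<^sub>R snd p" for p :: "'a \<times> 'a"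
  have "f ` closure (S \<times> S) \<subseteq> closure S"
  proof (rule image_closure_subset)
    show "continuous_on (closure (S \<times> S)) f" unfolding f_def by (intro continuous_intros)
    show "f ` (S \<times> S) \<subseteq> closure S" unfolding f_def using assms u by auto
  qed simp
  moreover have "(x, y) \<in> closure (S \<times> S)" using xy by (simp add: closure_Times)
  ultimately show "(1 - u) *\<^sub>R x + u *\<^sub>R y \<in> closure S" unfolding f_def by force
qed

lemma norm_diff_sq_le_if_midpoint_norm_ge:
  fixes a b :: "'a::real_inner"
  assumes "0 \<le> m" "m \<le> norm ((1/2) *\<^sub>R (a + b))"
  shows "(norm (a - b))\<^sup>2 \<le> 2 * (norm a)\<^sup>2 + 2 * (norm b)\<^sup>2 - 4 * m\<^sup>2"
proof -
  have "m\<^sup>2 \<le> (norm ((1/2) *\<^sub>R (a + b)))\<^sup>2" using assms by (intro power_mono)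
  moreover have "(norm (a - b))\<^sup>2 = 2 * (norm a)\<^sup>2 + 2 * (norm b)\<^sup>2 - 4 * (norm ((1/2) *\<^sub>R (a + b)))\<^sup>2"
    by (simp add: power2_norm_eq_inner inner_add_left inner_add_right inner_diff_left
        inner_diff_right inner_commute algebra_simps)
  ultimately show ?thesis by linarith
qed

lemma norm_sq_convex_combination:
  fixes a b :: "'a::real_inner"
  shows "(norm ((1 - l) *\<^sub>R a + l *\<^sub>R b))\<^sup>2
    = (1 - l) * (norm a)\<^sup>2 + l * (norm b)\<^sup>2 - l * (1 - l) * (norm (a - b))\<^sup>2"
  by (simp add: power2_norm_eq_inner inner_add_left inner_add_right inner_diff_left
      inner_diff_right inner_commute algebra_simps)

lemma Cauchy_if_norm_diff_sq_le:
  fixes d :: "nat \<Rightarrow> 'a::real_normed_vector"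
  assumes "e \<longlonglongrightarrow> 0" "\<And>k j. (norm (d k - d j))\<^sup>2 \<le> e k + e j"
  shows "Cauchy d"
  unfolding Cauchy_def
proof (intro allI impI)
  fix \<epsilon> :: real assume "0 < \<epsilon>"
  then have "\<forall>\<^sub>F k in sequentially. e k < \<epsilon>\<^sup>2 / 2"
    using assms(1) by (intro order_tendstoD(2)) auto
  then obtain N where N: "\<And>k. N \<le> k \<Longrightarrow> e k < \<epsilon>\<^sup>2 / 2" by (auto simp: eventually_sequentially)
  show "\<exists>M. \<forall>m\<ge>M. \<forall>n\<ge>M. dist (d m) (d n) < \<epsilon>"
  proof (intro exI allI impI)
    fix m n assume "N \<le> m" "N \<le> n"
    then have "(norm (d m - d n))\<^sup>2 < \<epsilon>\<^sup>2" using assms(2)[of m n] N[of m] N[of n] by linarith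
    then show "dist (d m) (d n) < \<epsilon>" using \<open>0 < \<epsilon>\<close> by (simp add: dist_norm power_less_imp_less_base)
  qed
qed

lemma convex_closed_has_min_norm:
  fixes D :: "'a::{real_inner,complete_space} set"
  assumes cv: "convex D" and cl: "closed D" and ne: "D \<noteq> {}"
  obtains p where "p \<in> D" "\<And>y. y \<in> D \<Longrightarrow> norm p \<le> norm y"
proof -
  define m where "m = Inf (norm ` D)"
  have m_le: "m \<le> norm y" if "y \<in> D" for y
    unfolding m_def using that by (intro cInf_lower) (auto intro: bdd_belowI[of _ 0])
  have m0: "0 \<le> m" unfolding m_def using ne by (intro cInf_greatest) auto
  define r where "r k = m + 1 / real (Suc k)" for k
  have "\<exists>y\<in>D. norm y < r k" for k
    using cInf_lessD[of "norm ` D" "r k"] ne unfolding r_def m_def by auto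
  then obtain d where d: "\<And>k. d k \<in> D" "\<And>k. norm (d k) < r k" by metis
  have d_sq: "(norm (d k))\<^sup>2 \<le> (r k)\<^sup>2" for k using d(2)[of k] by (intro power_mono) auto
  have r: "r \<longlonglongrightarrow> m"
    unfolding r_def using tendsto_add[OF tendsto_const LIMSEQ_inverse_real_of_nat, of m]
    by (simp add: inverse_eq_divide)
  have "Cauchy d"
  proof (rule Cauchy_if_norm_diff_sq_le)
    show "(\<lambda>k. 2 * ((r k)\<^sup>2 - m\<^sup>2)) \<longlonglongrightarrow> 0"
      using tendsto_mult_left[OF tendsto_diff[OF tendsto_power[OF r, of 2] tendsto_const], of 2 "m\<^sup>2"]
      by simp
    fix k j
    have "(1/2) *\<^sub>R (d k + d j) = (1 - 1/2) *\<^sub>R d k + (1/2) *\<^sub>R d j" by (simp add: algebra_simps)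
    also have "\<dots> \<in> D" by (rule convexD_alt[OF cv d(1)[of k] d(1)[of j]]) auto
    finally have "m \<le> norm ((1/2) *\<^sub>R (d k + d j))" by (rule m_le)
    then show "(norm (d k - d j))\<^sup>2 \<le> 2 * ((r k)\<^sup>2 - m\<^sup>2) + 2 * ((r j)\<^sup>2 - m\<^sup>2)"
      using norm_diff_sq_le_if_midpoint_norm_ge[OF m0] d_sq[of k] d_sq[of j] by fastforce
  qed
  then obtain p where p: "d \<longlonglongrightarrow> p" using Cauchy_convergent_iff convergent_def by blast
  have "p \<in> D" using closed_sequentially[OF cl] d(1) p by blast
  have "(\<lambda>k. norm (d k)) \<longlonglongrightarrow> m"
    by (rule tendsto_sandwich[OF _ _ tendsto_const r])
      (auto intro!: always_eventually m_le d(1) less_imp_le[OF d(2)])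
  then have "norm p = m" using LIMSEQ_unique[OF tendsto_norm[OF p]] by blast
  with \<open>p \<in> D\<close> m_le show ?thesis using that by auto
qed

lemma min_norm_unique:
  fixes D :: "'a::real_inner set"
  assumes cv: "convex D" and v: "v \<in> D" "\<And>y. y \<in> D \<Longrightarrow> norm v \<le> norm y"
    and d: "d \<in> D" "norm d \<le> norm v"
  shows "d = v"
proof -
  have "(1/2) *\<^sub>R (d + v) = (1 - 1/2) *\<^sub>R d + (1/2) *\<^sub>R v" by (simp add: algebra_simps)
  also have "\<dots> \<in> D" by (rule convexD_alt[OF cv d(1) v(1)]) auto
  finally have "norm v \<le> norm ((1/2) *\<^sub>R (d + v))" by (rule v(2))
  then have "(norm (d - v))\<^sup>2 \<le> 2 * (norm d)\<^sup>2 - 2 * (norm v)\<^sup>2"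
    using norm_diff_sq_le_if_midpoint_norm_ge[of "norm v" d v] by simp
  also have "\<dots> \<le> 0" using d(2) by (simp add: power_mono)
  finally show ?thesis by simp
qed

lemma proj_zero_min_norm:
  fixes D :: "'a::{real_inner,complete_space} set"
  assumes "convex D" "closed D" "D \<noteq> {}"
  shows "proj D 0 \<in> D" "\<And>y. y \<in> D \<Longrightarrow> norm (proj D 0) \<le> norm y"
proof -
  obtain p where "p \<in> D" "\<And>y. y \<in> D \<Longrightarrow> norm p \<le> norm y"
    using convex_closed_has_min_norm[OF assms] by blast
  then have "\<exists>p. p \<in> D \<and> (\<forall>y\<in>D. dist 0 p \<le> dist 0 y)" by auto
  then have "proj D 0 \<in> D \<and> (\<forall>y\<in>D. dist 0 (proj D 0) \<le> dist 0 y)"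
    unfolding proj_def by (rule someI_ex)
  then show "proj D 0 \<in> D" "\<And>y. y \<in> D \<Longrightarrow> norm (proj D 0) \<le> norm y" by auto
qed

lemma sq_le_if_sq_le_linear:
  fixes r t C B :: real
  assumes "0 < t" "t \<le> 1" "r\<^sup>2 \<le> t * C + t * B * r"
  shows "r\<^sup>2 \<le> t * (2 * C + B\<^sup>2)"
proof -
  have "2 * (t * B * r) \<le> (t * B)\<^sup>2 + r\<^sup>2"
    using sum_squares_bound[of "t * B" r] by (simp add: power2_eq_square algebra_simps)
  moreover have "(t * B)\<^sup>2 \<le> t * B\<^sup>2"
  proof -
    have "(t * B)\<^sup>2 = t * (t * B\<^sup>2)" by (simp add: power2_eq_square)
    also have "\<dots> \<le> t * B\<^sup>2" using assms(1,2) by (intro mult_left_le_one_le) auto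
    finally show ?thesis .
  qed
  ultimately show ?thesis using assms(3) by (simp add: algebra_simps)
qed

lemma nonexpansive_add_const: "nonexpansive T \<Longrightarrow> nonexpansive (\<lambda>x. v + T x)"
  unfolding nonexpansive_def by simp

lemma nonexpansive_displacement_monotone:
  fixes T :: "'a::real_inner \<Rightarrow> 'a"
  assumes "nonexpansive T"
  shows "0 \<le> inner ((x - T x) - (z - T z)) (x - z)"
proof -
  have "inner (T x - T z) (x - z) \<le> norm (T x - T z) * norm (x - z)" by (rule norm_cauchy_schwarz)
  also have "\<dots> \<le> norm (x - z) * norm (x - z)"
    using assms unfolding nonexpansive_def by (simp add: mult_right_mono)
  also have "\<dots> = inner (x - z) (x - z)" by (simp add: norm_eq_sqrt_inner)
  finally show ?thesis by (simp add: inner_diff_left algebra_simps)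
qed

lemma nonexpansive_resolvent_exists:
  fixes T :: "'a::{real_normed_vector,complete_space} \<Rightarrow> 'a"
  assumes "nonexpansive T" "0 < t"
  obtains x where "x - T x = c - t *\<^sub>R x"
proof -
  define f where "f x = (1 / (1 + t)) *\<^sub>R (T x + c)" for x
  have "dist (f x) (f y) \<le> (1 / (1 + t)) * dist x y" for x y
  proof -
    have "dist (f x) (f y) = (1 / (1 + t)) * norm (T x - T y)"
      using assms(2) by (simp add: f_def dist_norm flip: scaleR_diff_right)
    also have "\<dots> \<le> (1 / (1 + t)) * dist x y"
      using assms unfolding nonexpansive_def dist_norm by (intro mult_left_mono) auto
    finally show ?thesis .
  qed
  then obtain x where "f x = x" using banach_fix_type[of "1 / (1 + t)" f] assms(2) by auto
  then have "(1 + t) *\<^sub>R x = (1 + t) *\<^sub>R ((1 / (1 + t)) *\<^sub>R (T x + c))" unfolding f_def by simp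
  then have "(1 + t) *\<^sub>R x = T x + c" using assms(2) by simp
  then show ?thesis using that by (simp add: algebra_simps)
qed

lemma nonexpansive_resolvent_bound:
  fixes T :: "'a::real_inner \<Rightarrow> 'a" and z1 z2 :: 'a
  assumes ne: "nonexpansive T" and l: "0 \<le> l" "l \<le> 1"
  defines "c \<equiv> l *\<^sub>R (z1 - T z1) + (1 - l) *\<^sub>R (z2 - T z2)"
  obtains Q where "\<And>t x. 0 < t \<Longrightarrow> t \<le> 1 \<Longrightarrow> x - T x = c - t *\<^sub>R x \<Longrightarrow> (norm (t *\<^sub>R x))\<^sup>2 \<le> t * Q"
proof -
  define a1 a2 where "a1 = z1 - T z1" and "a2 = z2 - T z2"
  define z where "z = l *\<^sub>R z1 + (1 - l) *\<^sub>R z2"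
  define K where "K = l * inner (c - a1) z1 + (1 - l) * inner (c - a2) z2"
  have "(norm (t *\<^sub>R x))\<^sup>2 \<le> t * (2 * (- K) + (norm z)\<^sup>2)"
    if t: "0 < t" "t \<le> 1" and x: "x - T x = c - t *\<^sub>R x" for t x
  proof -
    have "0 \<le> l * inner ((c - t *\<^sub>R x) - a1) (x - z1) + (1 - l) * inner ((c - t *\<^sub>R x) - a2) (x - z2)"
      using nonexpansive_displacement_monotone[OF ne, of x z1]
        nonexpansive_displacement_monotone[OF ne, of x z2] l
      unfolding a1_def a2_def x by simp
    \<comment> \<open>\<open>c\<close> is the weighted mean of \<open>a1\<close>, \<open>a2\<close>, so the terms linear in \<open>x\<close> cancel\<close>
    also have "\<dots> = t * inner x z - t * (norm x)\<^sup>2 - K"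
      unfolding K_def z_def c_def a1_def a2_def
      by (simp add: power2_norm_eq_inner inner_add_left inner_add_right inner_diff_left
          inner_diff_right inner_commute algebra_simps)
    finally have "t * (norm x)\<^sup>2 \<le> t * inner x z - K" by simp
    also have "\<dots> \<le> t * (norm x * norm z) - K"
      using t by (simp add: mult_left_mono norm_cauchy_schwarz)
    finally have "t * (K + t * (norm x)\<^sup>2) \<le> t * (t * (norm x * norm z))"
      using t by (intro mult_left_mono) auto
    then have "(t * norm x)\<^sup>2 \<le> t * (- K) + t * norm z * (t * norm x)"
      by (simp add: power2_eq_square algebra_simps)
    then have "(t * norm x)\<^sup>2 \<le> t * (2 * (- K) + (norm z)\<^sup>2)"
      using t by (intro sq_le_if_sq_le_linear)
    then show ?thesis using t by simp
  qed
  then show ?thesis using that by blast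
qed

lemma convex_closure_range_displacement:
  fixes T :: "'a::{real_inner,complete_space} \<Rightarrow> 'a"
  assumes ne: "nonexpansive T"
  shows "convex (closure (range (\<lambda>x. x - T x)))"
proof (rule convex_closure_if_combinations_in_closure)
  fix x y and u :: real
  assume "x \<in> range (\<lambda>x. x - T x)" "y \<in> range (\<lambda>x. x - T x)" and u: "0 \<le> u" "u \<le> 1"
  then obtain z1 z2 where xy: "x = z1 - T z1" "y = z2 - T z2" by blast
  let ?c = "(1 - u) *\<^sub>R x + u *\<^sub>R y"
  obtain Q where Q: "\<And>t x. 0 < t \<Longrightarrow> t \<le> 1 \<Longrightarrow> x - T x = ?c - t *\<^sub>R x \<Longrightarrow> (norm (t *\<^sub>R x))\<^sup>2 \<le> t * Q"
    using nonexpansive_resolvent_bound[OF ne, of "1 - u" z1 z2] u unfolding xy by auto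
  show "?c \<in> closure (range (\<lambda>x. x - T x))"
  proof (rule mem_closure_if_dist_sq_le[where Q = Q])
    fix t :: real assume t: "0 < t" "t \<le> 1"
    then obtain w where w: "w - T w = ?c - t *\<^sub>R w" using nonexpansive_resolvent_exists[OF ne] by blast
    then have "(dist (w - T w) ?c)\<^sup>2 \<le> t * Q" using Q[OF t w] by (simp add: dist_norm)
    then show "\<exists>d\<in>range (\<lambda>x. x - T x). (dist d ?c)\<^sup>2 \<le> t * Q" by blast
  qed
qed

lemma displacement_eq_if_norm_le_infimal:
  fixes T :: "'a::{real_inner,complete_space} \<Rightarrow> 'a"
  assumes ne: "nonexpansive T" and v: "v = proj (closure (range (\<lambda>x. x - T x))) 0"
    and "norm (x - T x) \<le> norm v"
  shows "x - T x = v"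
proof -
  let ?D = "closure (range (\<lambda>x. x - T x))"
  have D: "convex ?D" "closed ?D" "?D \<noteq> {}"
    using convex_closure_range_displacement[OF ne] by simp_all
  have min: "v \<in> ?D" "\<And>y. y \<in> ?D \<Longrightarrow> norm v \<le> norm y"
    unfolding v by (fact proj_zero_min_norm[OF D])+
  have "x - T x \<in> ?D" by (rule closure_subset[THEN subsetD, OF rangeI])
  from min_norm_unique[OF D(1) min this assms(3)] show ?thesis .
qed

lemma convex_Fix_nonexpansive:
  fixes S :: "'a::real_inner \<Rightarrow> 'a"
  assumes ne: "nonexpansive S"
  shows "convex (Fix S)"
  unfolding convex_alt
proof (intro ballI allI impI)
  fix y y' and l :: real
  assume "y \<in> Fix S" "y' \<in> Fix S" and l: "0 \<le> l \<and> l \<le> 1"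
  then have y: "S y = y" "S y' = y'" by (auto simp: Fix_def)
  define w where "w = (1 - l) *\<^sub>R y + l *\<^sub>R y'"
  define a b where "a = S w - y" and "b = S w - y'"
  have "norm a \<le> norm (w - y)" "norm b \<le> norm (w - y')"
    using ne y unfolding nonexpansive_def a_def b_def by metis+
  moreover have "w - y = l *\<^sub>R (y' - y)" "w - y' = (1 - l) *\<^sub>R (y - y')"
    unfolding w_def by (simp_all add: algebra_simps)
  ultimately have ab: "norm a \<le> l * norm (y - y')" "norm b \<le> (1 - l) * norm (y - y')"
    using l by (simp_all add: norm_minus_commute)
  have "S w - w = (1 - l) *\<^sub>R a + l *\<^sub>R b" "a - b = y' - y"
    unfolding a_def b_def w_def by (simp_all add: algebra_simps)
  \<comment> \<open>\<open>S w\<close> lies in balls around \<open>y\<close>, \<open>y'\<close> with radii summing to \<open>\<parallel>y - y'\<parallel>\<close>; their only common point is \<open>w\<close>\<close>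
  then have "(norm (S w - w))\<^sup>2 = (1 - l) * (norm a)\<^sup>2 + l * (norm b)\<^sup>2 - l * (1 - l) * (norm (y - y'))\<^sup>2"
    by (simp add: norm_sq_convex_combination norm_minus_commute)
  also have "\<dots> \<le> (1 - l) * (l * norm (y - y'))\<^sup>2 + l * ((1 - l) * norm (y - y'))\<^sup>2
      - l * (1 - l) * (norm (y - y'))\<^sup>2"
    using ab l by (intro diff_right_mono add_mono mult_left_mono power_mono) auto
  also have "\<dots> = 0" by (simp add: power2_eq_square algebra_simps)
  finally show "(1 - l) *\<^sub>R y + l *\<^sub>R y' \<in> Fix S" by (simp add: Fix_def w_def)
qed

lemma convex_diff_ray_mem:
  fixes C :: "'a::real_vector set"
  assumes cv: "convex C" and shift: "\<And>y. y \<in> C \<Longrightarrow> y - v \<in> C" and "y \<in> C" "0 \<le> t"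
  shows "y - t *\<^sub>R v \<in> C"
proof -
  have nat: "y - real n *\<^sub>R v \<in> C" for n
  proof (induction n)
    case (Suc n)
    then show ?case using shift[OF Suc] by (simp add: algebra_simps)
  qed (simp add: \<open>y \<in> C\<close>)
  define n where "n = nat \<lfloor>t\<rfloor>"
  define s where "s = t - real n"
  have s: "0 \<le> s" "s \<le> 1" using \<open>0 \<le> t\<close> unfolding s_def n_def by linarith+
  have "y - t *\<^sub>R v = (1 - s) *\<^sub>R (y - real n *\<^sub>R v) + s *\<^sub>R (y - real (Suc n) *\<^sub>R v)"
    unfolding s_def by (simp add: algebra_simps)
  also have "\<dots> \<in> C" by (rule convexD_alt[OF cv nat nat s])
  finally show ?thesis .
qed

lemma Fix_shifted_arg_iff: "z \<in> Fix (\<lambda>x. T (x + v)) \<longleftrightarrow> z + v \<in> Fix (\<lambda>x. v + T x)"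
  for T :: "'a::real_vector \<Rightarrow> 'a"
  by (auto simp: Fix_def algebra_simps)

context
  fixes T :: "'a::real_inner \<Rightarrow> 'a" and v :: 'a
  assumes ne: "nonexpansive T"
    and infimal: "\<And>x. norm (x - T x) \<le> norm v \<Longrightarrow> x - T x = v"
begin

lemma Fix_add_const_diff_mem:
  assumes "y \<in> Fix (\<lambda>x. v + T x)"
  shows "y - v \<in> Fix (\<lambda>x. v + T x)"
proof -
  have y: "T y = y - v" using assms by (auto simp: Fix_def algebra_simps)
  have "norm (T y - T (T y)) \<le> norm (y - T y)" using ne unfolding nonexpansive_def by blast
  then have "T y - T (T y) = v" using infimal[of "T y"] y by simp
  then show ?thesis using y by (simp add: Fix_def algebra_simps)
qed

lemma Fix_add_const_diff_ray_mem:
  assumes "y \<in> Fix (\<lambda>x. v + T x)" "0 \<le> t"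
  shows "y - t *\<^sub>R v \<in> Fix (\<lambda>x. v + T x)"
  using convex_diff_ray_mem[OF convex_Fix_nonexpansive[OF nonexpansive_add_const[OF ne]]
      Fix_add_const_diff_mem assms] .

lemma funpow_Fix_add_const:
  assumes "y \<in> Fix (\<lambda>x. v + T x)"
  shows "(T ^^ n) y = y - real n *\<^sub>R v"
proof (induction n)
  case (Suc n)
  have "y - real n *\<^sub>R v \<in> Fix (\<lambda>x. v + T x)" using Fix_add_const_diff_ray_mem[OF assms] by simp
  then have "T (y - real n *\<^sub>R v) = y - real (Suc n) *\<^sub>R v" by (simp add: Fix_def algebra_simps)
  with Suc show ?case by simp
qed simp

lemma add_ray_Fix_shifted_arg_mem:
  assumes "t \<le> 1" "z \<in> Fix (\<lambda>x. T (x + v))"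
  shows "t *\<^sub>R v + z \<in> Fix (\<lambda>x. v + T x)"
proof -
  have "(z + v) - (1 - t) *\<^sub>R v \<in> Fix (\<lambda>x. v + T x)"
    using Fix_add_const_diff_ray_mem assms Fix_shifted_arg_iff[of z T v] by simp
  then show ?thesis by (simp add: algebra_simps)
qed

lemma funpow_Fix_shifted_arg:
  assumes "x0 \<in> Fix (\<lambda>x. T (x + v))"
  shows "(T ^^ n) x0 = x0 - real n *\<^sub>R v" "(T ^^ n) x0 \<in> Fix (\<lambda>x. T (x + v))"
proof -
  show n: "(T ^^ n) x0 = x0 - real n *\<^sub>R v"
    using funpow_Fix_add_const add_ray_Fix_shifted_arg_mem[of 0] assms by simp
  have "(x0 + v) - real n *\<^sub>R v \<in> Fix (\<lambda>x. v + T x)"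
    using Fix_add_const_diff_ray_mem assms Fix_shifted_arg_iff[of x0 T v] by simp
  then show "(T ^^ n) x0 \<in> Fix (\<lambda>x. T (x + v))"
    unfolding Fix_shifted_arg_iff n by (simp add: algebra_simps)
qed

lemma fejer_monotone_orbit_plus_ray:
  "fejer_monotone (\<lambda>n. (T ^^ n) x + real n *\<^sub>R v) (Fix (\<lambda>x. v + T x))"
  unfolding fejer_monotone_def
proof (intro ballI allI)
  fix c n assume "c \<in> Fix (\<lambda>x. v + T x)"
  then have "c - real n *\<^sub>R v \<in> Fix (\<lambda>x. v + T x)" using Fix_add_const_diff_ray_mem by simp
  then have c: "T (c - real n *\<^sub>R v) = c - real (Suc n) *\<^sub>R v" by (simp add: Fix_def algebra_simps)
  have "norm ((T ^^ Suc n) x + real (Suc n) *\<^sub>R v - c) = norm (T ((T ^^ n) x) - T (c - real n *\<^sub>R v))"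
    unfolding c by (simp add: algebra_simps)
  also have "\<dots> \<le> norm ((T ^^ n) x - (c - real n *\<^sub>R v))"
    using ne unfolding nonexpansive_def by blast
  also have "\<dots> = norm ((T ^^ n) x + real n *\<^sub>R v - c)" by (simp add: algebra_simps)
  finally show "norm ((T ^^ Suc n) x + real (Suc n) *\<^sub>R v - c)
      \<le> norm ((T ^^ n) x + real n *\<^sub>R v - c)" .
qed

end

lemma fejer_monotone_subset: "fejer_monotone y C \<Longrightarrow> B \<subseteq> C \<Longrightarrow> fejer_monotone y B"
  unfolding fejer_monotone_def by blast

theorem proposition2p4:
  fixes T :: "'a::{real_inner,complete_space} \<Rightarrow> 'a" and v y0 :: 'a
  assumes "nonexpansive T"
    and "v = proj (closure (range (\<lambda>x. x - T x))) 0"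
    and "v \<in> range (\<lambda>x. x - T x)"
    and "y0 \<in> Fix (\<lambda>x. v + T x)"
  shows "(\<forall>t\<ge>0. y0 - t *\<^sub>R v \<in> Fix (\<lambda>x. v + T x))
    \<and> {y - t *\<^sub>R v | y t. y \<in> Fix (\<lambda>x. v + T x) \<and> t \<ge> 0} = Fix (\<lambda>x. v + T x)
    \<and> (\<forall>t\<ge>0. - (t *\<^sub>R v) \<in> rec_cone (Fix (\<lambda>x. v + T x)))
    \<and> (\<forall>n. (T ^^ n) y0 = y0 - real n *\<^sub>R v)
    \<and> {t *\<^sub>R v + z | t z. t \<le> 1 \<and> z \<in> Fix (\<lambda>x. T (x + v))} \<subseteq> Fix (\<lambda>x. v + T x)
    \<and> Fix (\<lambda>x. T (x + v)) \<subseteq> Fix (\<lambda>x. v + T x)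
    \<and> (\<forall>x. fejer_monotone (\<lambda>n. (T ^^ n) x + real n *\<^sub>R v) (Fix (\<lambda>x. v + T x))
          \<and> fejer_monotone (\<lambda>n. (T ^^ n) x + real n *\<^sub>R v) (Fix (\<lambda>x. T (x + v))))
    \<and> (\<forall>x0 \<in> Fix (\<lambda>x. T (x + v)). \<forall>n. (T ^^ n) x0 = x0 - real n *\<^sub>R v
          \<and> (T ^^ n) x0 \<in> Fix (\<lambda>x. T (x + v)))"
proof -
  let ?F = "Fix (\<lambda>x. v + T x)" and ?G = "Fix (\<lambda>x. T (x + v))"
  note infimal = displacement_eq_if_norm_le_infimal[OF assms(1,2)]
  note ray = Fix_add_const_diff_ray_mem[OF assms(1) infimal]
  have G_F: "?G \<subseteq> ?F" using add_ray_Fix_shifted_arg_mem[OF assms(1) infimal, of 0] by auto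
  have rays: "{y - t *\<^sub>R v | y t. y \<in> ?F \<and> t \<ge> 0} = ?F"
  proof (intro equalityI subsetI)
    fix y assume "y \<in> ?F"
    then show "y \<in> {y - t *\<^sub>R v | y t. y \<in> ?F \<and> t \<ge> 0}"
      by (intro CollectI exI[of _ y] exI[of _ 0]) simp
  qed (use ray in blast)
  have rec: "\<forall>t\<ge>0. - (t *\<^sub>R v) \<in> rec_cone ?F" using ray by (simp add: rec_cone_def)
  have fejer: "fejer_monotone (\<lambda>n. (T ^^ n) x + real n *\<^sub>R v) ?F
      \<and> fejer_monotone (\<lambda>n. (T ^^ n) x + real n *\<^sub>R v) ?G" for x
    using fejer_monotone_orbit_plus_ray[OF assms(1) infimal] fejer_monotone_subset G_F by blast
  show ?thesis
    using assms(4) by (intro conjI allI impI ballI subsetI rays rec fejer G_F ray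
        funpow_Fix_add_const[OF assms(1) infimal] funpow_Fix_shifted_arg[OF assms(1) infimal])
      (auto intro: add_ray_Fix_shifted_arg_mem[OF assms(1) infimal])
qed

end
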